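(* Let $r\ge0$ be an integer and let $B(x,y)$ be a $q$-quasi-polynomial in $x$ and $y$ of degree $d$, i.e. a linear combination of terms $[x;q]_m[y;q]_n\rho_1^x\rho_2^y$ with $m+n\le d$ and $\rho_1,\rho_2$ roots of unity. Then $D(r,B)(x,y)$ is a $q$-quasi-polynomial of degree at most $2r+d$ in $x$ and $y$ (i.e. a linear combination of such terms with $m+n\le 2r+d$).
   Context: $q$ is an indeterminate; $[x;q]=(1-q^x)/(1-q)$, $[x;q]_m=\prod_{i=0}^{m-1}[x+i;q]$; coefficients of the linear combinations may be rational functions of $q$. Sums use the convention: $\sum_{i=a}^bf(i)=f(a)+\cdots+f(b)$ if $a\le b$, $0$ if $b=a-1$, and $-f(b+1)-\cdots-f(a-1)$ if $b+1\le a-1$. $D(0,B)=B$ and $D(r,B)(x,y)=\sum_{x'=x+1}^{y+1}\sum_{y'=x}^{y}D(r-1,B)(x',y')\,q^{x'+y'}$. *)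

theory Defs
  imports Complex_Main "HOL-Computational_Algebra.Polynomial" "HOL-Computational_Algebra.Fraction_Field"
begin

type_synonym qrat = "complex poly fract"

definition qvar :: qrat where "qvar = Fract [:0, 1:] 1"

definition cconst :: "complex \<Rightarrow> qrat" where "cconst c = Fract [:c:] 1"

definition qnum :: "int \<Rightarrow> qrat" where
  "qnum x = (1 - qvar powi x) / (1 - qvar)"

definition qpoch :: "int \<Rightarrow> nat \<Rightarrow> qrat" where
  "qpoch x m = (\<Prod>i<m. qnum (x + int i))"

definition gsum :: "(int \<Rightarrow> qrat) \<Rightarrow> int \<Rightarrow> int \<Rightarrow> qrat" where
  "gsum f a b = (if a \<le> b then (\<Sum>i\<in>{a..b}. f i) else - (\<Sum>i\<in>{b+1..a-1}. f i))"

definition root_of_unity :: "complex \<Rightarrow> bool" where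
  "root_of_unity \<rho> \<longleftrightarrow> (\<exists>k::nat. k > 0 \<and> \<rho> ^ k = 1)"

definition qquasi_poly :: "nat \<Rightarrow> (int \<Rightarrow> int \<Rightarrow> qrat) \<Rightarrow> bool" where
  "qquasi_poly d B \<longleftrightarrow>
     (\<exists>ts :: (qrat \<times> nat \<times> nat \<times> complex \<times> complex) list.
        (\<forall>(c, m, n, \<rho>1, \<rho>2) \<in> set ts. m + n \<le> d \<and> root_of_unity \<rho>1 \<and> root_of_unity \<rho>2) \<and>
        (\<forall>x y. B x y = (\<Sum>(c, m, n, \<rho>1, \<rho>2) \<leftarrow> ts.
             c * qpoch x m * qpoch y n * cconst \<rho>1 powi x * cconst \<rho>2 powi y)))"

fun D :: "nat \<Rightarrow> (int \<Rightarrow> int \<Rightarrow> qrat) \<Rightarrow> int \<Rightarrow> int \<Rightarrow> qrat" where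
  "D 0 B = B"
| "D (Suc r) B = (\<lambda>x y. gsum (\<lambda>x'. gsum (\<lambda>y'. D r B x' y' * qvar powi (x' + y')) x y) (x + 1) (y + 1))"

end

theory Submission
  imports Defs "HOL-Library.Function_Algebras"
begin

text \<open>Multiplication by \<open>q^x\<close> raises the degree of a q-quasi-polynomial by one:
  \<open>q^x [x;q]_m = q^-m ([x;q]_m - (1 - q) [x;q]_(m+1))\<close>, and conversely
  \<open>[x+m;q] = (1 - q^m q^x) / (1 - q)\<close>. Hence the q-quasi-polynomials of degree at most \<open>d\<close>
  are exactly the linear combinations of the q-exponentials \<open>(q^a \<rho>1)^x (q^b \<rho>2)^y\<close> with
  \<open>a + b \<le> d\<close>. On such a q-exponential \<open>D(1,-)\<close> factors into a product of two geometric sums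
  with ratios \<open>q^(a+1) \<rho>1\<close> and \<open>q^(b+1) \<rho>2\<close> (neither is 1, as q is an indeterminate), and
  expanding this product gives four q-exponentials of degree \<open>a + b + 2\<close>. Since \<open>D(1,-)\<close> is
  linear and \<open>D(r+1,B) = D(1,D(r,B))\<close>, induction on r concludes.\<close>

lemma Fract_const_eq_iff: "Fract (a::'a::idom) 1 = Fract b 1 \<longleftrightarrow> a = b"
  by (simp add: eq_fract)

lemma Fract_const_power: "Fract (a::'a::idom) 1 ^ k = Fract (a ^ k) 1"
  by (induction k) (simp_all add: One_fract_def)

lemma qvar_nonzero [simp]: "qvar \<noteq> 0"
  unfolding qvar_def Zero_fract_def Fract_const_eq_iff by simp

lemma qvar_neq_1: "qvar \<noteq> 1"
  unfolding qvar_def One_fract_def Fract_const_eq_iff by (simp add: one_pCons)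

lemma cconst_mult: "cconst (a * b) = cconst a * cconst b"
  by (simp add: cconst_def mult.commute)

lemma cconst_1 [simp]: "cconst 1 = 1"
  by (simp add: cconst_def One_fract_def one_pCons)

lemma cconst_nonzero: "c \<noteq> 0 \<Longrightarrow> cconst c \<noteq> 0"
  by (simp add: cconst_def Zero_fract_def Fract_const_eq_iff)

lemma qvar_power_cconst_neq_1:
  assumes "k > 0"
  shows "qvar ^ k * cconst c \<noteq> 1"
proof \<comment> \<open>evaluate the numerator at \<open>q = 0\<close>\<close>
  assume "qvar ^ k * cconst c = 1"
  then have "[:0, 1:] ^ k * [:c:] = (1 :: complex poly)"
    unfolding qvar_def cconst_def Fract_const_power mult_fract One_fract_def by (simp add: eq_fract)
  then have "poly ([:0, 1:] ^ k * [:c:]) 0 = 1"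
    by simp
  with assms show False
    by (simp add: power_0_left)
qed

lemma root_of_unity_1: "root_of_unity 1"
  unfolding root_of_unity_def by auto

lemma root_of_unity_nonzero: "root_of_unity \<rho> \<Longrightarrow> \<rho> \<noteq> 0"
  unfolding root_of_unity_def by (auto simp: power_0_left)

lemma root_of_unity_mult:
  assumes "root_of_unity \<rho>" "root_of_unity \<sigma>"
  shows "root_of_unity (\<rho> * \<sigma>)"
proof -
  obtain k l where "k > 0" "\<rho> ^ k = 1" "l > 0" "\<sigma> ^ l = 1"
    using assms unfolding root_of_unity_def by blast
  moreover have "(\<rho> * \<sigma>) ^ (k * l) = (\<rho> ^ k) ^ l * (\<sigma> ^ l) ^ k"
    by (simp add: power_mult_distrib power_mult[symmetric] mult.commute)
  ultimately have "(\<rho> * \<sigma>) ^ (k * l) = 1"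
    by simp
  with \<open>k > 0\<close> \<open>l > 0\<close> show ?thesis
    unfolding root_of_unity_def by (intro exI[of _ "k * l"]) simp
qed

lemma one_minus_qvar_mult_qnum: "(1 - qvar) * qnum (x + int i) = 1 - qvar ^ i * qvar powi x"
  using qvar_neq_1 by (simp add: qnum_def power_int_add)

lemma qnum_add_nat: "qnum (x + int i) = 1 / (1 - qvar) - qvar ^ i / (1 - qvar) * qvar powi x"
  using one_minus_qvar_mult_qnum[of x i] qvar_neq_1 by (simp add: field_simps)

lemma qpoch_0 [simp]: "qpoch x 0 = 1"
  by (simp add: qpoch_def)

lemma qpoch_Suc: "qpoch x (Suc m) = qnum (x + int m) * qpoch x m"
  by (simp add: qpoch_def lessThan_Suc mult.commute)

lemma qvar_powi_mult_qpoch: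
  "qvar powi x * qpoch x m = (qpoch x m - (1 - qvar) * qpoch x (Suc m)) / qvar ^ m"
proof -
  have "(1 - qvar) * qpoch x (Suc m) = qpoch x m * ((1 - qvar) * qnum (x + int m))"
    by (simp add: qpoch_Suc mult_ac)
  also have "\<dots> = qpoch x m * (1 - qvar ^ m * qvar powi x)"
    by (simp only: one_minus_qvar_mult_qnum)
  also have "\<dots> = qpoch x m - qvar ^ m * (qvar powi x * qpoch x m)"
    by (simp add: algebra_simps)
  finally show ?thesis
    by (simp add: field_simps)
qed

lemma sum_int_interval_telescope:
  fixes G :: "int \<Rightarrow> 'a::ab_group_add"
  assumes "\<And>i. f i = G (i + 1) - G i" and "a - 1 \<le> b"
  shows "(\<Sum>i\<in>{a..b}. f i) = G (b + 1) - G a"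
  using assms(2)
proof (induction b rule: int_ge_induct)
  case base
  then show ?case by simp
next
  case (step b)
  have "{a..b + 1} = insert (b + 1) {a..b}"
    using step.hyps by auto
  then have "(\<Sum>i\<in>{a..b + 1}. f i) = f (b + 1) + (\<Sum>i\<in>{a..b}. f i)"
    by simp
  also have "\<dots> = (G (b + 1 + 1) - G (b + 1)) + (G (b + 1) - G a)"
    using step.IH assms(1)[of "b + 1"] by (simp only:)
  finally show ?case
    by simp
qed

text \<open>The sign convention for empty and reversed ranges is exactly what makes telescoping
  hold without the hypothesis \<open>a \<le> b\<close>.\<close>

lemma gsum_telescope:
  assumes "\<And>i. f i = G (i + 1) - G i"
  shows "gsum f a b = G (b + 1) - G a"
proof (cases "a \<le> b")
  case True
  then show ?thesis
    using sum_int_interval_telescope[of f G a b, OF assms] by (simp add: gsum_def)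
next
  case False
  then show ?thesis
    using sum_int_interval_telescope[of f G "b + 1" "a - 1", OF assms] by (simp add: gsum_def)
qed

lemma gsum_add: "gsum (\<lambda>i. f i + g i) a b = gsum f a b + gsum g a b"
  unfolding gsum_def by (simp add: sum.distrib)

lemma gsum_mult_left: "gsum (\<lambda>i. c * f i) a b = c * gsum f a b"
  unfolding gsum_def by (simp add: sum_distrib_left)

lemma gsum_mult_right: "gsum (\<lambda>i. f i * c) a b = gsum f a b * c"
  using gsum_mult_left[of c f a b] by (simp add: mult.commute)

lemma gsum_geometric:
  assumes "w \<noteq> 0" "w \<noteq> 1"
  shows "gsum (\<lambda>i. w powi i) a b = (w powi (b + 1) - w powi a) / (w - 1)"
proof -
  have "w - 1 \<noteq> 0"
    using assms(2) by simp
  have "w powi (i + 1) = w powi i * w" for i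
    using assms(1) by (simp add: power_int_add_1)
  then have "w powi (i + 1) - w powi i = w powi i * (w - 1)" for i
    by (simp add: right_diff_distrib)
  then have "w powi i = w powi (i + 1) / (w - 1) - w powi i / (w - 1)" for i
    using \<open>w - 1 \<noteq> 0\<close> by (simp add: diff_divide_distrib[symmetric])
  then have "gsum (\<lambda>i. w powi i) a b = w powi (b + 1) / (w - 1) - w powi a / (w - 1)"
    by (rule gsum_telescope)
  then show ?thesis
    by (simp add: diff_divide_distrib)
qed

definition fun2_scale :: "'k::comm_ring_1 \<Rightarrow> ('a \<Rightarrow> 'b \<Rightarrow> 'k) \<Rightarrow> 'a \<Rightarrow> 'b \<Rightarrow> 'k" where
  "fun2_scale c f = (\<lambda>x y. c * f x y)"

lemma fun2_scale_apply: "fun2_scale c f x y = c * f x y"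
  by (simp add: fun2_scale_def)

interpretation fun2: module fun2_scale
  by unfold_locales (auto simp: fun2_scale_def fun_eq_iff algebra_simps)

lemma fun2_module_homI:
  assumes "\<And>f g. L (f + g) = L f + L g" and "\<And>c f. L (fun2_scale c f) = fun2_scale c (L f)"
  shows "module_hom fun2_scale fun2_scale L"
  using assms by (simp add: module_hom_iff fun2.module_axioms)

lemma fun2_span_linear_image:
  assumes L: "module_hom fun2_scale fun2_scale L"
    and B: "\<And>g. g \<in> B \<Longrightarrow> L g \<in> fun2.span C"
    and f: "f \<in> fun2.span B"
  shows "L f \<in> fun2.span C"
proof -
  have "L f \<in> fun2.span (L ` B)"
    using module_hom.spans_image[OF L, of "{f}" B] f by simp
  also have "\<dots> \<subseteq> fun2.span C"
    using B by (intro fun2.span_minimal) auto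
  finally show ?thesis .
qed

lemma fun2_span_swap:
  assumes "\<And>g. g \<in> S \<Longrightarrow> (\<lambda>x y. g y x) \<in> S" and "f \<in> fun2.span S"
  shows "(\<lambda>x y. f y x) \<in> fun2.span S"
proof (rule fun2_span_linear_image[where L = "\<lambda>f x y. f y x"])
  show "module_hom fun2_scale fun2_scale (\<lambda>f x y. f y x)"
    by (rule fun2_module_homI) (simp_all add: fun2_scale_def plus_fun_def)
qed (use assms in \<open>auto intro: fun2.span_base\<close>)

lemma fun2_span_mult:
  assumes "\<And>g. g \<in> S \<Longrightarrow> (\<lambda>x y. h x y * g x y) \<in> fun2.span T" and "f \<in> fun2.span S"
  shows "(\<lambda>x y. h x y * f x y) \<in> fun2.span T"
proof (rule fun2_span_linear_image[where L = "\<lambda>f x y. h x y * f x y"])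
  show "module_hom fun2_scale fun2_scale (\<lambda>f x y. h x y * f x y)"
    by (rule fun2_module_homI) (simp_all add: fun2_scale_def plus_fun_def algebra_simps)
qed (use assms in auto)

definition qexp :: "nat \<Rightarrow> complex \<Rightarrow> int \<Rightarrow> qrat" where
  "qexp a \<rho> x = (qvar ^ a * cconst \<rho>) powi x"

lemma qexp_0: "qexp 0 \<rho> x = cconst \<rho> powi x"
  by (simp add: qexp_def)

lemma qvar_powi_mult_qexp: "qvar powi x * qexp a \<rho> x = qexp (Suc a) \<rho> x"
  by (simp add: qexp_def power_int_mult_distrib)

lemma qexp_mult: "qexp a \<rho> x * qexp b \<sigma> x = qexp (a + b) (\<rho> * \<sigma>) x"
  by (simp add: qexp_def power_int_mult_distrib power_add cconst_mult mult_ac)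

lemma qexp_1_mult_cconst_powi: "qexp a 1 x * cconst \<rho> powi x = qexp a \<rho> x"
  using qexp_mult[of a 1 x 0 \<rho>] by (simp add: qexp_0)

lemma qexp_add_1:
  assumes "\<rho> \<noteq> 0"
  shows "qexp a \<rho> (x + 1) = (qvar ^ a * cconst \<rho>) * qexp a \<rho> x"
  unfolding qexp_def using assms cconst_nonzero by (simp add: power_int_add_1')

definition qexp_terms :: "nat \<Rightarrow> (int \<Rightarrow> int \<Rightarrow> qrat) set" where
  "qexp_terms d = {(\<lambda>x y. qexp a \<rho>1 x * qexp b \<rho>2 y) | a b \<rho>1 \<rho>2.
     a + b \<le> d \<and> root_of_unity \<rho>1 \<and> root_of_unity \<rho>2}"

definition qpoch_terms :: "nat \<Rightarrow> (int \<Rightarrow> int \<Rightarrow> qrat) set" where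
  "qpoch_terms d = {(\<lambda>x y. qpoch x m * qpoch y n * cconst \<rho>1 powi x * cconst \<rho>2 powi y) | m n \<rho>1 \<rho>2.
     m + n \<le> d \<and> root_of_unity \<rho>1 \<and> root_of_unity \<rho>2}"

lemma qexp_terms_mono: "d \<le> d' \<Longrightarrow> qexp_terms d \<subseteq> qexp_terms d'"
  unfolding qexp_terms_def by fastforce

lemma qpoch_terms_mono: "d \<le> d' \<Longrightarrow> qpoch_terms d \<subseteq> qpoch_terms d'"
  unfolding qpoch_terms_def by fastforce

lemma qexp_terms_swap:
  assumes "f \<in> qexp_terms d"
  shows "(\<lambda>x y. f y x) \<in> qexp_terms d"
proof -
  obtain a b \<rho>1 \<rho>2 where "a + b \<le> d" "root_of_unity \<rho>1" "root_of_unity \<rho>2"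
    and f: "f = (\<lambda>x y. qexp a \<rho>1 x * qexp b \<rho>2 y)"
    using assms unfolding qexp_terms_def by blast
  moreover have "(\<lambda>x y. f y x) = (\<lambda>x y. qexp b \<rho>2 x * qexp a \<rho>1 y)"
    by (simp add: f mult.commute)
  ultimately show ?thesis
    unfolding qexp_terms_def
    by (intro CollectI exI[of _ b] exI[of _ a] exI[of _ \<rho>2] exI[of _ \<rho>1]) auto
qed

lemma qpoch_terms_swap:
  assumes "f \<in> qpoch_terms d"
  shows "(\<lambda>x y. f y x) \<in> qpoch_terms d"
proof -
  obtain m n \<rho>1 \<rho>2 where "m + n \<le> d" "root_of_unity \<rho>1" "root_of_unity \<rho>2"
    and f: "f = (\<lambda>x y. qpoch x m * qpoch y n * cconst \<rho>1 powi x * cconst \<rho>2 powi y)"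
    using assms unfolding qpoch_terms_def by blast
  moreover have "(\<lambda>x y. f y x)
      = (\<lambda>x y. qpoch x n * qpoch y m * cconst \<rho>2 powi x * cconst \<rho>1 powi y)"
    by (simp add: f mult_ac)
  ultimately show ?thesis
    unfolding qpoch_terms_def
    by (intro CollectI exI[of _ n] exI[of _ m] exI[of _ \<rho>2] exI[of _ \<rho>1]) auto
qed

definition qpoch_combination ::
  "(qrat \<times> nat \<times> nat \<times> complex \<times> complex) list \<Rightarrow> int \<Rightarrow> int \<Rightarrow> qrat" where
  "qpoch_combination ts x y = (\<Sum>(c, m, n, \<rho>1, \<rho>2) \<leftarrow> ts.
     c * qpoch x m * qpoch y n * cconst \<rho>1 powi x * cconst \<rho>2 powi y)"

lemma qpoch_combination_Nil: "qpoch_combination [] = 0"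
  by (simp add: qpoch_combination_def fun_eq_iff)

lemma qpoch_combination_Cons:
  "qpoch_combination ((c, m, n, \<rho>1, \<rho>2) # ts) = fun2_scale c
     (\<lambda>x y. qpoch x m * qpoch y n * cconst \<rho>1 powi x * cconst \<rho>2 powi y) + qpoch_combination ts"
  by (simp add: qpoch_combination_def fun_eq_iff fun2_scale_apply mult.assoc)

lemma qquasi_poly_iff_qpoch_combination:
  "qquasi_poly d B \<longleftrightarrow> (\<exists>ts. (\<forall>(c, m, n, \<rho>1, \<rho>2) \<in> set ts.
     m + n \<le> d \<and> root_of_unity \<rho>1 \<and> root_of_unity \<rho>2) \<and> B = qpoch_combination ts)"
  unfolding qquasi_poly_def qpoch_combination_def by (simp add: fun_eq_iff)

lemma qpoch_combination_in_span:
  assumes "\<forall>(c, m, n, \<rho>1, \<rho>2) \<in> set ts. m + n \<le> d \<and> root_of_unity \<rho>1 \<and> root_of_unity \<rho>2"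
  shows "qpoch_combination ts \<in> fun2.span (qpoch_terms d)"
  using assms
proof (induction ts)
  case Nil
  show ?case
    unfolding qpoch_combination_Nil by (rule fun2.span_zero)
next
  case (Cons t ts)
  obtain c m n \<rho>1 \<rho>2 where t: "t = (c, m, n, \<rho>1, \<rho>2)"
    by (cases t)
  have "(\<lambda>x y. qpoch x m * qpoch y n * cconst \<rho>1 powi x * cconst \<rho>2 powi y) \<in> qpoch_terms d"
    using Cons.prems t unfolding qpoch_terms_def by auto
  then show ?case
    using Cons unfolding t qpoch_combination_Cons
    by (intro fun2.span_add[OF fun2.span_scale[OF fun2.span_base]]) auto
qed

lemma qquasi_poly_iff_span: "qquasi_poly d B \<longleftrightarrow> B \<in> fun2.span (qpoch_terms d)"
proof
  assume "qquasi_poly d B"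
  then show "B \<in> fun2.span (qpoch_terms d)"
    unfolding qquasi_poly_iff_qpoch_combination using qpoch_combination_in_span by blast
next
  assume "B \<in> fun2.span (qpoch_terms d)"
  then show "qquasi_poly d B"
  proof (induction rule: fun2.span_induct_alt)
    case base
    show ?case
      unfolding qquasi_poly_iff_qpoch_combination
      by (intro exI[of _ "[]"]) (simp add: qpoch_combination_Nil)
  next
    case (step c g f)
    obtain m n \<rho>1 \<rho>2 where "m + n \<le> d" "root_of_unity \<rho>1" "root_of_unity \<rho>2"
      and g: "g = (\<lambda>x y. qpoch x m * qpoch y n * cconst \<rho>1 powi x * cconst \<rho>2 powi y)"
      using step.hyps unfolding qpoch_terms_def by blast
    moreover obtain ts
      where "\<forall>(c, m, n, \<rho>1, \<rho>2) \<in> set ts. m + n \<le> d \<and> root_of_unity \<rho>1 \<and> root_of_unity \<rho>2"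
      and "f = qpoch_combination ts"
      using step.IH unfolding qquasi_poly_iff_qpoch_combination by blast
    ultimately show ?case
      unfolding qquasi_poly_iff_qpoch_combination
      by (intro exI[of _ "(c, m, n, \<rho>1, \<rho>2) # ts"]) (simp add: qpoch_combination_Cons)
  qed
qed

lemma span_qexp_terms_mult_qvar_powi:
  assumes "f \<in> fun2.span (qexp_terms d)"
  shows "(\<lambda>x y. qvar powi x * f x y) \<in> fun2.span (qexp_terms (Suc d))"
proof (rule fun2_span_mult[OF _ assms])
  fix g assume "g \<in> qexp_terms d"
  then obtain a b \<rho>1 \<rho>2 where "a + b \<le> d" "root_of_unity \<rho>1" "root_of_unity \<rho>2"
    and g: "g = (\<lambda>x y. qexp a \<rho>1 x * qexp b \<rho>2 y)"
    unfolding qexp_terms_def by blast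
  then have "(\<lambda>x y. qvar powi x * g x y) \<in> qexp_terms (Suc d)"
    unfolding qexp_terms_def
    by (intro CollectI exI[of _ "Suc a"] exI[of _ b] exI[of _ \<rho>1] exI[of _ \<rho>2])
      (simp add: qvar_powi_mult_qexp mult.assoc[symmetric])
  then show "(\<lambda>x y. qvar powi x * g x y) \<in> fun2.span (qexp_terms (Suc d))"
    by (rule fun2.span_base)
qed

lemma span_qexp_terms_mult_qpoch:
  assumes "f \<in> fun2.span (qexp_terms d)"
  shows "(\<lambda>x y. qpoch x m * f x y) \<in> fun2.span (qexp_terms (m + d))"
proof (induction m)
  case 0
  then show ?case
    using assms by simp
next
  case (Suc m)
  let ?g = "\<lambda>x y. qpoch x m * f x y"
  let ?qg = "\<lambda>x y. qvar powi x * ?g x y"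
  have qpoch_Suc_f: "(\<lambda>x y. qpoch x (Suc m) * f x y)
      = fun2_scale (1 / (1 - qvar)) ?g - fun2_scale (qvar ^ m / (1 - qvar)) ?qg"
    by (simp add: fun_eq_iff fun2_scale_apply qpoch_Suc qnum_add_nat algebra_simps)
  have "?g \<in> fun2.span (qexp_terms (Suc m + d))"
    using Suc.IH fun2.span_mono[OF qexp_terms_mono[of "m + d" "Suc m + d"]] by auto
  moreover have "?qg \<in> fun2.span (qexp_terms (Suc m + d))"
    using span_qexp_terms_mult_qvar_powi[OF Suc.IH] by simp
  ultimately show ?case
    unfolding qpoch_Suc_f by (intro fun2.span_diff fun2.span_scale)
qed

lemma span_qpoch_terms_mult_qvar_powi:
  assumes "f \<in> fun2.span (qpoch_terms d)"
  shows "(\<lambda>x y. qvar powi x * f x y) \<in> fun2.span (qpoch_terms (Suc d))"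
proof (rule fun2_span_mult[OF _ assms])
  fix g assume "g \<in> qpoch_terms d"
  then obtain m n \<rho>1 \<rho>2 where "m + n \<le> d" "root_of_unity \<rho>1" "root_of_unity \<rho>2"
    and g: "g = (\<lambda>x y. qpoch x m * qpoch y n * cconst \<rho>1 powi x * cconst \<rho>2 powi y)"
    unfolding qpoch_terms_def by blast
  let ?g' = "\<lambda>x y. qpoch x (Suc m) * qpoch y n * cconst \<rho>1 powi x * cconst \<rho>2 powi y"
  have "g \<in> qpoch_terms (Suc d)"
    unfolding g qpoch_terms_def using \<open>m + n \<le> d\<close> \<open>root_of_unity \<rho>1\<close> \<open>root_of_unity \<rho>2\<close>
    by (intro CollectI exI[of _ m] exI[of _ n] exI[of _ \<rho>1] exI[of _ \<rho>2]) auto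
  moreover have "?g' \<in> qpoch_terms (Suc d)"
    unfolding qpoch_terms_def using \<open>m + n \<le> d\<close> \<open>root_of_unity \<rho>1\<close> \<open>root_of_unity \<rho>2\<close>
    by (intro CollectI exI[of _ "Suc m"] exI[of _ n] exI[of _ \<rho>1] exI[of _ \<rho>2]) auto
  ultimately have "fun2_scale (1 / qvar ^ m) g + fun2_scale (- ((1 - qvar) / qvar ^ m)) ?g'
      \<in> fun2.span (qpoch_terms (Suc d))"
    by (intro fun2.span_add fun2.span_scale fun2.span_base)
  moreover have "fun2_scale (1 / qvar ^ m) g + fun2_scale (- ((1 - qvar) / qvar ^ m)) ?g'
      = (\<lambda>x y. qvar powi x * g x y)"
  proof (rule ext, rule ext)
    fix x y
    let ?r = "qpoch y n * cconst \<rho>1 powi x * cconst \<rho>2 powi y"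
    have "qvar powi x * g x y = (qvar powi x * qpoch x m) * ?r"
      by (simp add: g mult_ac)
    also have "\<dots> = (qpoch x m - (1 - qvar) * qpoch x (Suc m)) / qvar ^ m * ?r"
      by (simp only: qvar_powi_mult_qpoch)
    also have "\<dots> = 1 / qvar ^ m * g x y + - ((1 - qvar) / qvar ^ m) * ?g' x y"
      by (simp add: g field_simps)
    finally show "(fun2_scale (1 / qvar ^ m) g + fun2_scale (- ((1 - qvar) / qvar ^ m)) ?g') x y
        = qvar powi x * g x y"
      by (simp add: fun2_scale_apply)
  qed
  ultimately show "(\<lambda>x y. qvar powi x * g x y) \<in> fun2.span (qpoch_terms (Suc d))"
    by simp
qed

lemma span_qpoch_terms_mult_qexp:
  assumes "f \<in> fun2.span (qpoch_terms d)"
  shows "(\<lambda>x y. qexp a 1 x * f x y) \<in> fun2.span (qpoch_terms (a + d))"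
proof (induction a)
  case 0
  then show ?case
    using assms by (simp add: qexp_0)
next
  case (Suc a)
  then have "(\<lambda>x y. qvar powi x * (qexp a 1 x * f x y)) \<in> fun2.span (qpoch_terms (Suc a + d))"
    using span_qpoch_terms_mult_qvar_powi by simp
  then show ?case
    by (simp add: qvar_powi_mult_qexp mult.assoc[symmetric])
qed

lemma qpoch_terms_subset_span_qexp_terms: "qpoch_terms d \<subseteq> fun2.span (qexp_terms d)"
proof
  fix g assume "g \<in> qpoch_terms d"
  then obtain m n \<rho>1 \<rho>2 where "m + n \<le> d" "root_of_unity \<rho>1" "root_of_unity \<rho>2"
    and g: "g = (\<lambda>x y. qpoch x m * qpoch y n * cconst \<rho>1 powi x * cconst \<rho>2 powi y)"
    unfolding qpoch_terms_def by blast
  let ?h = "\<lambda>x y. qexp 0 \<rho>2 x * qexp 0 \<rho>1 y"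
  \<comment> \<open>the factor in \<open>y\<close> is built in the variable \<open>x\<close>, then the variables are swapped\<close>
  have "?h \<in> fun2.span (qexp_terms 0)"
    unfolding qexp_terms_def using \<open>root_of_unity \<rho>1\<close> \<open>root_of_unity \<rho>2\<close>
    by (intro fun2.span_base) auto
  then have "(\<lambda>x y. qpoch x n * ?h x y) \<in> fun2.span (qexp_terms n)"
    using span_qexp_terms_mult_qpoch by fastforce
  then have "(\<lambda>x y. qpoch y n * ?h y x) \<in> fun2.span (qexp_terms n)"
    using qexp_terms_swap by (rule fun2_span_swap[rotated])
  then have "(\<lambda>x y. qpoch x m * (qpoch y n * ?h y x)) \<in> fun2.span (qexp_terms (m + n))"
    by (rule span_qexp_terms_mult_qpoch)
  then have "g \<in> fun2.span (qexp_terms (m + n))"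
    by (simp add: g qexp_0 mult_ac)
  then show "g \<in> fun2.span (qexp_terms d)"
    using fun2.span_mono[OF qexp_terms_mono[OF \<open>m + n \<le> d\<close>]] by blast
qed

lemma qexp_terms_subset_span_qpoch_terms: "qexp_terms d \<subseteq> fun2.span (qpoch_terms d)"
proof
  fix g assume "g \<in> qexp_terms d"
  then obtain a b \<rho>1 \<rho>2 where "a + b \<le> d" "root_of_unity \<rho>1" "root_of_unity \<rho>2"
    and g: "g = (\<lambda>x y. qexp a \<rho>1 x * qexp b \<rho>2 y)"
    unfolding qexp_terms_def by blast
  let ?h = "\<lambda>x y. qpoch x 0 * qpoch y 0 * cconst \<rho>2 powi x * cconst \<rho>1 powi y"
  have "?h \<in> fun2.span (qpoch_terms 0)"
    unfolding qpoch_terms_def using \<open>root_of_unity \<rho>1\<close> \<open>root_of_unity \<rho>2\<close>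
    by (intro fun2.span_base) auto
  then have "(\<lambda>x y. qexp b 1 x * ?h x y) \<in> fun2.span (qpoch_terms b)"
    using span_qpoch_terms_mult_qexp by fastforce
  then have "(\<lambda>x y. qexp b 1 y * ?h y x) \<in> fun2.span (qpoch_terms b)"
    using qpoch_terms_swap by (rule fun2_span_swap[rotated])
  then have "(\<lambda>x y. qexp a 1 x * (qexp b 1 y * ?h y x)) \<in> fun2.span (qpoch_terms (a + b))"
    by (rule span_qpoch_terms_mult_qexp)
  moreover have "(\<lambda>x y. qexp a 1 x * (qexp b 1 y * ?h y x)) = g"
    unfolding g qexp_1_mult_cconst_powi[of a _ \<rho>1, symmetric]
      qexp_1_mult_cconst_powi[of b _ \<rho>2, symmetric]
    by (simp add: fun_eq_iff mult_ac)
  ultimately have "g \<in> fun2.span (qpoch_terms (a + b))"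
    by simp
  then show "g \<in> fun2.span (qpoch_terms d)"
    using fun2.span_mono[OF qpoch_terms_mono[OF \<open>a + b \<le> d\<close>]] by blast
qed

lemma span_qpoch_terms_eq_span_qexp_terms: "fun2.span (qpoch_terms d) = fun2.span (qexp_terms d)"
  by (simp add: fun2.span_eq qpoch_terms_subset_span_qexp_terms qexp_terms_subset_span_qpoch_terms)

lemma D_Suc_eq_D_1: "D (Suc r) B = D 1 (D r B)"
  by simp

lemma module_hom_D_1: "module_hom fun2_scale fun2_scale (D 1)"
  by (rule fun2_module_homI)
    (simp_all add: fun_eq_iff fun2_scale_apply distrib_right gsum_add gsum_mult_left mult.assoc)

lemma D_1_qexp_product:
  "D 1 (\<lambda>x y. qexp a \<rho>1 x * qexp b \<rho>2 y) x y
     = gsum (qexp (Suc a) \<rho>1) (x + 1) (y + 1) * gsum (qexp (Suc b) \<rho>2) x y"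
proof -
  have "qexp a \<rho>1 x' * qexp b \<rho>2 y' * qvar powi (x' + y') = qexp (Suc a) \<rho>1 x' * qexp (Suc b) \<rho>2 y'"
    for x' y'
    by (simp add: power_int_add qvar_powi_mult_qexp[symmetric] mult_ac)
  then show ?thesis
    by (simp add: gsum_mult_left gsum_mult_right)
qed

lemma gsum_qexp:
  assumes "a > 0" "\<rho> \<noteq> 0"
  shows "gsum (qexp a \<rho>) u v = (qexp a \<rho> (v + 1) - qexp a \<rho> u) / (qvar ^ a * cconst \<rho> - 1)"
  unfolding qexp_def
  using gsum_geometric[of "qvar ^ a * cconst \<rho>"] assms qvar_power_cconst_neq_1 cconst_nonzero
  by simp

lemma D_1_qexp_eq:
  fixes a b :: nat and \<rho>1 \<rho>2 :: complex
  assumes \<rho>: "\<rho>1 \<noteq> 0" "\<rho>2 \<noteq> 0"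
  defines "w1 \<equiv> qvar ^ Suc a * cconst \<rho>1" and "w2 \<equiv> qvar ^ Suc b * cconst \<rho>2"
    and "K \<equiv> 1 / ((qvar ^ Suc a * cconst \<rho>1 - 1) * (qvar ^ Suc b * cconst \<rho>2 - 1))"
  shows "D 1 (\<lambda>x y. qexp a \<rho>1 x * qexp b \<rho>2 y) x y
    = K * w1 ^ 2 * w2 * qexp (Suc a + Suc b) (\<rho>1 * \<rho>2) y
      - K * w1 ^ 2 * qexp (Suc b) \<rho>2 x * qexp (Suc a) \<rho>1 y
      - K * w1 * w2 * qexp (Suc a) \<rho>1 x * qexp (Suc b) \<rho>2 y
      + K * w1 * qexp (Suc a + Suc b) (\<rho>1 * \<rho>2) x"
proof -
  have "D 1 (\<lambda>x y. qexp a \<rho>1 x * qexp b \<rho>2 y) x y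
      = K * ((qexp (Suc a) \<rho>1 (y + 1 + 1) - qexp (Suc a) \<rho>1 (x + 1))
          * (qexp (Suc b) \<rho>2 (y + 1) - qexp (Suc b) \<rho>2 x))"
    unfolding D_1_qexp_product gsum_qexp[OF zero_less_Suc \<rho>(1)] gsum_qexp[OF zero_less_Suc \<rho>(2)]
    by (simp add: K_def w1_def w2_def)
  also have "\<dots> = K * ((w1 * (w1 * qexp (Suc a) \<rho>1 y) - w1 * qexp (Suc a) \<rho>1 x)
      * (w2 * qexp (Suc b) \<rho>2 y - qexp (Suc b) \<rho>2 x))"
    unfolding w1_def w2_def by (simp only: qexp_add_1[OF \<rho>(1)] qexp_add_1[OF \<rho>(2)])
  also have "\<dots> = K * w1 ^ 2 * w2 * qexp (Suc a + Suc b) (\<rho>1 * \<rho>2) y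
      - K * w1 ^ 2 * qexp (Suc b) \<rho>2 x * qexp (Suc a) \<rho>1 y
      - K * w1 * w2 * qexp (Suc a) \<rho>1 x * qexp (Suc b) \<rho>2 y
      + K * w1 * qexp (Suc a + Suc b) (\<rho>1 * \<rho>2) x"
    using qexp_mult[of "Suc a" \<rho>1 _ "Suc b" \<rho>2] by (simp add: power2_eq_square algebra_simps)
  finally show ?thesis .
qed

lemma D_1_qexp_in_span:
  assumes "root_of_unity \<rho>1" "root_of_unity \<rho>2"
  shows "D 1 (\<lambda>x y. qexp a \<rho>1 x * qexp b \<rho>2 y) \<in> fun2.span (qexp_terms (Suc (Suc (a + b))))"
proof -
  have \<rho>: "\<rho>1 \<noteq> 0" "\<rho>2 \<noteq> 0"
    using assms root_of_unity_nonzero by auto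
  let ?T1 = "\<lambda>x y. qexp 0 1 x * qexp (Suc a + Suc b) (\<rho>1 * \<rho>2) y"
  let ?T2 = "\<lambda>x y. qexp (Suc b) \<rho>2 x * qexp (Suc a) \<rho>1 y"
  let ?T3 = "\<lambda>x y. qexp (Suc a) \<rho>1 x * qexp (Suc b) \<rho>2 y"
  let ?T4 = "\<lambda>x y. qexp (Suc a + Suc b) (\<rho>1 * \<rho>2) x * qexp 0 1 y"
  have "?T1 \<in> qexp_terms (Suc (Suc (a + b)))" "?T2 \<in> qexp_terms (Suc (Suc (a + b)))"
    "?T3 \<in> qexp_terms (Suc (Suc (a + b)))" "?T4 \<in> qexp_terms (Suc (Suc (a + b)))"
    unfolding qexp_terms_def using assms root_of_unity_1 root_of_unity_mult by fastforce+
  then have "fun2_scale c1 ?T1 + fun2_scale c2 ?T2 + fun2_scale c3 ?T3 + fun2_scale c4 ?T4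
      \<in> fun2.span (qexp_terms (Suc (Suc (a + b))))" for c1 c2 c3 c4
    by (intro fun2.span_add fun2.span_scale fun2.span_base)
  moreover
  let ?w1 = "qvar ^ Suc a * cconst \<rho>1" and ?w2 = "qvar ^ Suc b * cconst \<rho>2"
  let ?K = "1 / ((?w1 - 1) * (?w2 - 1))"
  have "D 1 (\<lambda>x y. qexp a \<rho>1 x * qexp b \<rho>2 y) = fun2_scale (?K * ?w1 ^ 2 * ?w2) ?T1
      + fun2_scale (- (?K * ?w1 ^ 2)) ?T2 + fun2_scale (- (?K * ?w1 * ?w2)) ?T3
      + fun2_scale (?K * ?w1) ?T4"
  proof (intro ext)
    fix x y
    show "D 1 (\<lambda>x y. qexp a \<rho>1 x * qexp b \<rho>2 y) x y = (fun2_scale (?K * ?w1 ^ 2 * ?w2) ?T1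
      + fun2_scale (- (?K * ?w1 ^ 2)) ?T2 + fun2_scale (- (?K * ?w1 * ?w2)) ?T3
      + fun2_scale (?K * ?w1) ?T4) x y"
      unfolding D_1_qexp_eq[OF \<rho>] by (simp add: fun2_scale_apply qexp_0 mult.assoc)
  qed
  ultimately show ?thesis
    by (simp only:)
qed

lemma D_in_span_qexp_terms:
  assumes "B \<in> fun2.span (qexp_terms d)"
  shows "D r B \<in> fun2.span (qexp_terms (2 * r + d))"
proof (induction r)
  case 0
  then show ?case
    using assms by simp
next
  case (Suc r)
  have atoms: "D 1 g \<in> fun2.span (qexp_terms (2 * Suc r + d))"
    if g_term: "g \<in> qexp_terms (2 * r + d)" for g
  proof -
    obtain a b \<rho>1 \<rho>2 where "a + b \<le> 2 * r + d" "root_of_unity \<rho>1" "root_of_unity \<rho>2"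
      and g: "g = (\<lambda>x y. qexp a \<rho>1 x * qexp b \<rho>2 y)"
      using g_term unfolding qexp_terms_def by blast
    have "D 1 g \<in> fun2.span (qexp_terms (Suc (Suc (a + b))))"
      unfolding g using \<open>root_of_unity \<rho>1\<close> \<open>root_of_unity \<rho>2\<close> by (rule D_1_qexp_in_span)
    moreover have "Suc (Suc (a + b)) \<le> 2 * Suc r + d"
      using \<open>a + b \<le> 2 * r + d\<close> by simp
    ultimately show ?thesis
      using fun2.span_mono[OF qexp_terms_mono] by blast
  qed
  show ?case
    unfolding D_Suc_eq_D_1 using module_hom_D_1 atoms Suc.IH by (rule fun2_span_linear_image)
qed

theorem lemma14:
  fixes r d :: nat and B :: "int \<Rightarrow> int \<Rightarrow> qrat"
  assumes "qquasi_poly d B"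
  shows "qquasi_poly (2 * r + d) (D r B)"
proof -
  have "B \<in> fun2.span (qexp_terms d)"
    using assms by (simp add: qquasi_poly_iff_span span_qpoch_terms_eq_span_qexp_terms)
  then have "D r B \<in> fun2.span (qexp_terms (2 * r + d))"
    by (rule D_in_span_qexp_terms)
  then show ?thesis
    by (simp add: qquasi_poly_iff_span span_qpoch_terms_eq_span_qexp_terms)
qed

end
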